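(* Let $\mathbb H$ be the real quaternion algebra and $f(z)=z^n+a_{n-1}z^{n-1}+\dots+a_1z+a_0$ with $a_0,\dots,a_{n-1}\in\mathbb H$, $a_0\neq0$, evaluated as $f(z_0)=z_0^n+a_{n-1}z_0^{n-1}+\dots+a_0$. Set $a_n=1$ and define polynomials in commuting real-central variables $r,N$ with quaternion coefficients $$g(r,N)=\sum_{k=1}^n a_k\sum_{m=0}^{\lfloor (k-1)/2\rfloor}\binom{k}{2m+1}(-1)^mN^mr^{k-2m-1},\qquad h(r,N)=a_0+\sum_{k=1}^n a_k\sum_{m=0}^{\lfloor k/2\rfloor}\binom{k}{2m}(-1)^mN^mr^{k-2m}.$$ For $z_0\in\mathbb H$ let $r_0=\Re(z_0)$, $x_0=\Im(z_0)$, $N_0=-x_0^2$. Then $z_0$ is a root of $f$ if and only if one of the following holds: (1) $g(r_0,N_0)=h(r_0,N_0)=0$; or (2) $(r_0,N_0)$ satisfies $-g(r,N)\overline{g(r,N)}g(r,N)N=h(r,N)\overline{g(r,N)}h(r,N)$ and $x_0=-g(r_0,N_0)^{-1}h(r_0,N_0)$.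
   Context: For $q=c_1+c_2i+c_3j+c_4k\in\mathbb H$: $\Re(q)=c_1$, $\Im(q)=q-\Re(q)$, $\bar q=\Re(q)-\Im(q)$. For a polynomial $p(r,N)$ with quaternion coefficients, $\overline{p(r,N)}$ is obtained by conjugating the coefficients. With these $g,h$ one has $f(z_0)=g(r_0,N_0)x_0+h(r_0,N_0)$. *)

theory Defs
  imports Complex_Main
begin

datatype quat = Quat (qRe: real) (qI: real) (qJ: real) (qK: real)

lemma quat_eqI: "qRe x = qRe y \<Longrightarrow> qI x = qI y \<Longrightarrow> qJ x = qJ y \<Longrightarrow> qK x = qK y \<Longrightarrow> x = y"
  by (cases x; cases y) simp

instantiation quat :: "{ab_group_add, one, times, inverse, real_vector}"
begin
definition "0 = Quat 0 0 0 0"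
definition "1 = Quat 1 0 0 0"
definition "x + y = Quat (qRe x + qRe y) (qI x + qI y) (qJ x + qJ y) (qK x + qK y)"
definition "- x = Quat (- qRe x) (- qI x) (- qJ x) (- qK x)"
definition "x - y = Quat (qRe x - qRe y) (qI x - qI y) (qJ x - qJ y) (qK x - qK y)"
definition "scaleR c x = Quat (c * qRe x) (c * qI x) (c * qJ x) (c * qK x)"
definition "x * y = Quat
   (qRe x * qRe y - qI x * qI y - qJ x * qJ y - qK x * qK y)
   (qRe x * qI y + qI x * qRe y + qJ x * qK y - qK x * qJ y)
   (qRe x * qJ y - qI x * qK y + qJ x * qRe y + qK x * qI y)
   (qRe x * qK y + qI x * qJ y - qJ x * qI y + qK x * qRe y)"
definition "inverse x = (let d = (qRe x)\<^sup>2 + (qI x)\<^sup>2 + (qJ x)\<^sup>2 + (qK x)\<^sup>2 in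
   Quat (qRe x / d) (- qI x / d) (- qJ x / d) (- qK x / d))"
definition "x div (y::quat) = x * inverse y"
instance
  by standard (auto intro!: quat_eqI simp: zero_quat_def plus_quat_def uminus_quat_def
      minus_quat_def scaleR_quat_def algebra_simps)
end

instance quat :: real_algebra_1
  by standard (auto intro!: quat_eqI simp: zero_quat_def one_quat_def plus_quat_def
      times_quat_def scaleR_quat_def algebra_simps)

definition qcnj :: "quat \<Rightarrow> quat" where
  "qcnj q = Quat (qRe q) (- qI q) (- qJ q) (- qK q)"

definition qIm :: "quat \<Rightarrow> quat" where
  "qIm q = q - of_real (qRe q)"

definition fpoly :: "(nat \<Rightarrow> quat) \<Rightarrow> nat \<Rightarrow> quat \<Rightarrow> quat" where
  "fpoly a n z = z ^ n + (\<Sum>k<n. a k * z ^ k)"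

definition coeffs1 :: "(nat \<Rightarrow> quat) \<Rightarrow> nat \<Rightarrow> nat \<Rightarrow> quat" where
  "coeffs1 a n k = (if k = n then 1 else a k)"

text \<open>g(r,N) and h(r,N) with coefficient sequence c, evaluated at (real-valued, central) r, N.\<close>
definition gpoly :: "(nat \<Rightarrow> quat) \<Rightarrow> nat \<Rightarrow> quat \<Rightarrow> quat \<Rightarrow> quat" where
  "gpoly c n r N = (\<Sum>k=1..n. c k * (\<Sum>m=0..(k - 1) div 2.
      of_nat (k choose (2*m+1)) * (-1) ^ m * N ^ m * r ^ (k - 2*m - 1)))"

definition hpoly :: "(nat \<Rightarrow> quat) \<Rightarrow> nat \<Rightarrow> quat \<Rightarrow> quat \<Rightarrow> quat" where
  "hpoly c n r N = c 0 + (\<Sum>k=1..n. c k * (\<Sum>m=0..k div 2.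
      of_nat (k choose (2*m)) * (-1) ^ m * N ^ m * r ^ (k - 2*m)))"

end

theory Submission
  imports Defs
begin

text \<open>Write \<open>z\<^sub>0 = r\<^sub>0 + x\<^sub>0\<close> with \<open>x\<^sub>0\<close> purely imaginary. Since \<open>x\<^sub>0\<^sup>2 = -N\<^sub>0\<close> is real,
  \<open>r\<^sub>0\<close> and \<open>x\<^sub>0\<close> lie in a commutative copy of \<open>\<complex>\<close> inside \<open>\<bbbH>\<close>, so the binomial theorem splits
  \<open>z\<^sub>0\<^sup>k\<close> into its even and odd parts in \<open>x\<^sub>0\<close>, both real polynomials in \<open>r\<^sub>0, N\<^sub>0\<close>; summing against
  the coefficients gives \<open>f(z\<^sub>0) = g(r\<^sub>0,N\<^sub>0) x\<^sub>0 + h(r\<^sub>0,N\<^sub>0)\<close>. If \<open>g = 0\<close> this vanishes iff \<open>h = 0\<close>;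
  otherwise iff \<open>x\<^sub>0 = -g\<^sup>-\<^sup>1h\<close>, and then \<open>h g\<^sup>* h = g x\<^sub>0 (g\<^sup>* g) x\<^sub>0 = g g\<^sup>* g x\<^sub>0\<^sup>2\<close> because \<open>g\<^sup>* g\<close>
  is real, which is the extra equation of case (2).\<close>

lemma sum_atMost_split_0:
  fixes f :: "nat \<Rightarrow> 'a::comm_monoid_add"
  shows "(\<Sum>k\<le>n. f k) = f 0 + (\<Sum>k=1..n. f k)"
  by (simp add: atMost_atLeast0 sum.atLeast_Suc_atMost)

lemma sum_lessThan_double:
  fixes f :: "nat \<Rightarrow> 'a::comm_monoid_add"
  shows "(\<Sum>j<2*n. f j) = (\<Sum>m<n. f (2*m)) + (\<Sum>m<n. f (2*m+1))"
  by (induction n) (simp_all add: ac_simps)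

definition binom_even :: "'a::ring_1 \<Rightarrow> 'a \<Rightarrow> nat \<Rightarrow> 'a" where
  "binom_even r N k = (\<Sum>m=0..k div 2. of_nat (k choose (2*m)) * (-1)^m * N^m * r^(k-2*m))"

definition binom_odd :: "'a::ring_1 \<Rightarrow> 'a \<Rightarrow> nat \<Rightarrow> 'a" where
  "binom_odd r N k = (\<Sum>m=0..(k-1) div 2. of_nat (k choose (2*m+1)) * (-1)^m * N^m * r^(k-2*m-1))"

lemma binom_even_0 [simp]: "binom_even r N 0 = 1"
  by (simp add: binom_even_def)

lemma binom_odd_0 [simp]: "binom_odd r N 0 = 0"
  by (simp add: binom_odd_def)

lemma binom_even_of_real:
  "binom_even (of_real \<rho>) (of_real \<sigma>) k = (of_real (binom_even \<rho> \<sigma> k) :: 'a::real_algebra_1)"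
  by (simp add: binom_even_def)

lemma binom_odd_of_real:
  "binom_odd (of_real \<rho>) (of_real \<sigma>) k = (of_real (binom_odd \<rho> \<sigma> k) :: 'a::real_algebra_1)"
  by (simp add: binom_odd_def)

lemma power_add_even_odd:
  fixes r y N :: "'a::comm_ring_1"
  assumes y2: "y^2 = - N"
  shows "(r + y)^k = binom_even r N k + binom_odd r N k * y"
proof -
  define F where "F j = of_nat (k choose j) * y^j * r^(k-j)" for j
  have F0: "F j = 0" if "k < j" for j using that by (simp add: F_def binomial_eq_0)
  have y_even: "y^(2*m) = (-1)^m * N^m" "y^(m*2) = (-1)^m * N^m" for m
    unfolding power_mult mult.commute[of m] y2 by (rule power_minus)+
  have "(r+y)^k = (\<Sum>j<2*(k+1). F j)"
    unfolding F_def add.commute[of r] binomial_ring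
    by (rule sum.mono_neutral_left) (auto simp: binomial_eq_0)
  also have "\<dots> = (\<Sum>m<k+1. F (2*m)) + (\<Sum>m<k+1. F (2*m+1))"
    by (rule sum_lessThan_double)
  also have "(\<Sum>m<k+1. F (2*m)) = (\<Sum>m=0..k div 2. F (2*m))"
    by (rule sum.mono_neutral_right) (auto intro: F0)
  also have "(\<Sum>m<k+1. F (2*m+1)) = (\<Sum>m=0..(k-1) div 2. F (2*m+1))"
    by (rule sum.mono_neutral_right) (auto intro: F0)
  also have "(\<Sum>m=0..k div 2. F (2*m)) = binom_even r N k"
    unfolding binom_even_def by (rule sum.cong) (simp_all add: F_def y_even)
  also have "(\<Sum>m=0..(k-1) div 2. F (2*m+1)) = binom_odd r N k * y"
    unfolding binom_odd_def sum_distrib_right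
    by (rule sum.cong) (simp_all add: F_def y_even mult_ac)
  finally show ?thesis .
qed

lemma of_real_mult_commute: "x * of_real t = of_real t * (x::'a::real_algebra_1)"
  by (simp add: of_real_def)

lemma complex_embedding_mult:
  fixes u :: "'a::real_algebra_1"
  assumes "u * u = - 1"
  defines "\<phi> \<equiv> \<lambda>z. of_real (Re z) + of_real (Im z) * u"
  shows "\<phi> (z * w) = \<phi> z * \<phi> w"
proof -
  have "\<phi> z * \<phi> w = (Re z * Re w) *\<^sub>R 1 + (Re z * Im w + Im z * Re w) *\<^sub>R u
      + (Im z * Im w) *\<^sub>R (u * u)"
    unfolding \<phi>_def by (simp add: of_real_def algebra_simps)
  then show ?thesis
    unfolding \<phi>_def assms(1) by (simp add: of_real_def algebra_simps)
qed

lemma power_of_real_plus_unit: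
  fixes u :: "'a::real_algebra_1"
  assumes u: "u * u = - 1"
  shows "(of_real \<rho> + of_real s * u)^k
    = of_real (binom_even \<rho> (s^2) k) + of_real (binom_odd \<rho> (s^2) k) * (of_real s * u)"
proof -
  define \<phi> :: "complex \<Rightarrow> 'a" where "\<phi> z = of_real (Re z) + of_real (Im z) * u" for z
  have \<phi>_mult: "\<phi> (z * w) = \<phi> z * \<phi> w" for z w
    unfolding \<phi>_def by (rule complex_embedding_mult[OF u])
  have \<phi>_power: "\<phi> (z^k) = \<phi> z ^ k" for z
    by (induction k) (simp_all add: \<phi>_mult \<phi>_def[of 1])
  have "(\<i> * of_real s)^2 = - complex_of_real (s^2)"
    by (simp add: power_mult_distrib)
  from power_add_even_odd[OF this, of "of_real \<rho>" k]
  have "(of_real \<rho> + \<i> * of_real s)^k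
      = complex_of_real (binom_even \<rho> (s^2) k) + of_real (binom_odd \<rho> (s^2) k) * (\<i> * of_real s)"
    by (simp only: binom_even_of_real binom_odd_of_real)
  then have "\<phi> (of_real \<rho> + \<i> * of_real s) ^ k
      = \<phi> (of_real (binom_even \<rho> (s^2) k) + of_real (binom_odd \<rho> (s^2) k) * (\<i> * of_real s))"
    by (simp only: \<phi>_power flip: \<phi>_power)
  then show ?thesis
    by (simp add: \<phi>_def mult.assoc)
qed

lemma of_real_unit_square:
  fixes u :: "'a::real_algebra_1"
  assumes "u * u = - 1"
  shows "(of_real s * u)^2 = - of_real (s^2)"
  using assms by (simp add: power2_eq_square of_real_def)

lemma quat_of_real_simps [simp]:
  "qRe (of_real t) = t" "qI (of_real t) = 0" "qJ (of_real t) = 0" "qK (of_real t) = 0"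
  by (simp_all add: of_real_def scaleR_quat_def one_quat_def)

lemma quat_component_simps [simp]:
  "qRe (x + y) = qRe x + qRe y" "qI (x + y) = qI x + qI y" "qJ (x + y) = qJ x + qJ y" "qK (x + y) = qK x + qK y"
  "qRe (x - y) = qRe x - qRe y" "qI (x - y) = qI x - qI y" "qJ (x - y) = qJ x - qJ y" "qK (x - y) = qK x - qK y"
  "qRe (- x) = - qRe x" "qI (- x) = - qI x" "qJ (- x) = - qJ x" "qK (- x) = - qK x"
  "qRe (0::quat) = 0" "qI (0::quat) = 0" "qJ (0::quat) = 0" "qK (0::quat) = 0"
  "qRe (1::quat) = 1" "qI (1::quat) = 0" "qJ (1::quat) = 0" "qK (1::quat) = 0"
  by (simp_all add: plus_quat_def minus_quat_def uminus_quat_def zero_quat_def one_quat_def)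

lemma quat_mult_components:
  "qRe (x * y) = qRe x * qRe y - qI x * qI y - qJ x * qJ y - qK x * qK y"
  "qI (x * y) = qRe x * qI y + qI x * qRe y + qJ x * qK y - qK x * qJ y"
  "qJ (x * y) = qRe x * qJ y - qI x * qK y + qJ x * qRe y + qK x * qI y"
  "qK (x * y) = qRe x * qK y + qI x * qJ y - qJ x * qI y + qK x * qRe y"
  by (simp_all add: times_quat_def)

definition qnorm2 :: "quat \<Rightarrow> real" where
  "qnorm2 q = (qRe q)\<^sup>2 + (qI q)\<^sup>2 + (qJ q)\<^sup>2 + (qK q)\<^sup>2"

lemma qnorm2_eq_0_iff: "qnorm2 q = 0 \<longleftrightarrow> q = 0"
  by (auto simp: qnorm2_def add_nonneg_eq_0_iff intro: quat_eqI)

lemma qcnj_mult_self: "qcnj q * q = of_real (qnorm2 q)"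
  by (intro quat_eqI) (simp_all add: quat_mult_components qcnj_def qnorm2_def power2_eq_square)

lemma mult_qcnj_self: "q * qcnj q = of_real (qnorm2 q)"
  by (intro quat_eqI) (simp_all add: quat_mult_components qcnj_def qnorm2_def power2_eq_square)

lemma inverse_quat_eq: "inverse q = of_real (inverse (qnorm2 q)) * qcnj q"
  by (intro quat_eqI)
    (simp_all add: quat_mult_components qcnj_def inverse_quat_def qnorm2_def Let_def field_simps)

lemma quat_inverse_mult:
  assumes "(q::quat) \<noteq> 0"
  shows "inverse q * q = 1" and "q * inverse q = 1"
proof -
  have "qnorm2 q \<noteq> 0" using assms by (simp add: qnorm2_eq_0_iff)
  then have norm_inverse: "of_real (inverse (qnorm2 q)) * of_real (qnorm2 q) = (1::quat)"
    by (simp flip: of_real_mult)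
  show "inverse q * q = 1"
    unfolding inverse_quat_eq mult.assoc qcnj_mult_self norm_inverse ..
  show "q * inverse q = 1"
    unfolding inverse_quat_eq mult.assoc[symmetric] of_real_mult_commute
    unfolding mult.assoc mult_qcnj_self norm_inverse ..
qed

lemma qcnj_add: "qcnj (x + y) = qcnj x + qcnj y"
  by (intro quat_eqI) (simp_all add: qcnj_def)

lemma qcnj_zero: "qcnj 0 = 0"
  by (intro quat_eqI) (simp_all add: qcnj_def)

lemma qcnj_mult_of_real: "qcnj (x * of_real t) = qcnj x * of_real t"
  by (intro quat_eqI) (simp_all add: qcnj_def quat_mult_components)

lemma qcnj_sum: "qcnj (\<Sum>k\<in>A. f k) = (\<Sum>k\<in>A. qcnj (f k))"
  using sum_comp_morphism[of qcnj f A, OF qcnj_zero qcnj_add] by (simp add: o_def)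

lemma qRe_qIm [simp]: "qRe (qIm q) = 0"
  by (simp add: qIm_def)

lemma pure_quat_square:
  assumes "qRe q = 0"
  shows "q * q = - of_real (qnorm2 q)"
  using assms
  by (intro quat_eqI) (simp_all add: quat_mult_components qnorm2_def power2_eq_square)

lemma qIm_eq_scaled_unit: "\<exists>s u. u * u = -1 \<and> qIm q = of_real s * u"
proof (cases "qIm q = 0")
  case True
  have "Quat 0 1 0 0 * Quat 0 1 0 0 = -1"
    by (intro quat_eqI) (simp_all add: quat_mult_components)
  with True show ?thesis by (intro exI[of _ 0] exI[of _ "Quat 0 1 0 0"]) simp
next
  case False
  define s where "s = sqrt (qnorm2 (qIm q))"
  have "qnorm2 (qIm q) > 0"
    using False qnorm2_eq_0_iff[of "qIm q"] by (simp add: qnorm2_def order_less_le)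
  then have s: "s > 0" "s^2 = qnorm2 (qIm q)" by (simp_all add: s_def)
  define u where "u = inverse s *\<^sub>R qIm q"
  have "u * u = (inverse s * inverse s) *\<^sub>R (qIm q * qIm q)"
    by (simp add: u_def)
  also have "\<dots> = - ((inverse s * inverse s * qnorm2 (qIm q)) *\<^sub>R 1)"
    by (simp add: pure_quat_square of_real_def)
  also have "inverse s * inverse s * qnorm2 (qIm q) = 1"
    using s by (simp add: field_simps power2_eq_square flip: s(2))
  finally have "u * u = - 1" by simp
  moreover have "qIm q = of_real s * u"
    using s by (simp add: u_def flip: scaleR_conv_of_real)
  ultimately show ?thesis by blast
qed

lemma gpoly_of_real: "gpoly c n (of_real \<rho>) (of_real \<sigma>) = (\<Sum>k=1..n. c k * of_real (binom_odd \<rho> \<sigma> k))"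
  unfolding gpoly_def by (simp only: binom_odd_def[symmetric] binom_odd_of_real)

lemma hpoly_of_real: "hpoly c n (of_real \<rho>) (of_real \<sigma>) = c 0 + (\<Sum>k=1..n. c k * of_real (binom_even \<rho> \<sigma> k))"
  unfolding hpoly_def by (simp only: binom_even_def[symmetric] binom_even_of_real)

lemma gpoly_qcnj_of_real:
  "gpoly (qcnj \<circ> c) n (of_real \<rho>) (of_real \<sigma>) = qcnj (gpoly c n (of_real \<rho>) (of_real \<sigma>))"
  by (simp add: gpoly_of_real qcnj_sum qcnj_mult_of_real)

lemma fpoly_eq_sum_coeffs1: "fpoly a n z = (\<Sum>k\<le>n. coeffs1 a n k * z^k)"
  by (simp add: fpoly_def coeffs1_def add.commute flip: lessThan_Suc_atMost)

lemma fpoly_of_real_plus_unit: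
  assumes u: "u * u = - 1"
  shows "fpoly a n (of_real \<rho> + of_real s * u)
    = gpoly (coeffs1 a n) n (of_real \<rho>) (of_real (s^2)) * (of_real s * u)
      + hpoly (coeffs1 a n) n (of_real \<rho>) (of_real (s^2))"
proof -
  define c where "c = coeffs1 a n"
  define x where "x = of_real s * u"
  have "fpoly a n (of_real \<rho> + x)
      = (\<Sum>k\<le>n. c k * (of_real (binom_even \<rho> (s^2) k) + of_real (binom_odd \<rho> (s^2) k) * x))"
    by (simp add: fpoly_eq_sum_coeffs1 power_of_real_plus_unit[OF u] c_def x_def)
  also have "\<dots> = (\<Sum>k\<le>n. c k * of_real (binom_odd \<rho> (s^2) k)) * x
      + (\<Sum>k\<le>n. c k * of_real (binom_even \<rho> (s^2) k))"
    by (simp add: distrib_left sum.distrib sum_distrib_right mult.assoc add.commute)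
  also have "\<dots> = gpoly c n (of_real \<rho>) (of_real (s^2)) * x + hpoly c n (of_real \<rho>) (of_real (s^2))"
    by (simp add: gpoly_of_real hpoly_of_real sum_atMost_split_0[of _ n] del: of_real_power)
  finally show ?thesis by (simp only: c_def x_def)
qed

lemma quat_linear_eq_0_iff:
  fixes g x h :: quat
  assumes "g \<noteq> 0"
  shows "g * x + h = 0 \<longleftrightarrow> x = - (inverse g * h)"
proof
  assume "g * x + h = 0"
  then have "h = - (g * x)"
    by (simp add: eq_neg_iff_add_eq_0 add.commute)
  then show "x = - (inverse g * h)"
    by (simp add: quat_inverse_mult[OF assms] flip: mult.assoc)
next
  assume "x = - (inverse g * h)"
  then show "g * x + h = 0"
    by (simp add: quat_inverse_mult[OF assms] flip: mult.assoc)
qed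

lemma quat_linear_root_constraint:
  fixes g x h :: quat
  assumes "g * x + h = 0"
  shows "h * qcnj g * h = g * qcnj g * g * x^2"
proof -
  have "h = - (g * x)" using assms by (simp add: eq_neg_iff_add_eq_0 add.commute)
  then have "h * qcnj g * h = g * x * (qcnj g * g) * x"
    by (simp add: mult.assoc)
  also have "\<dots> = g * (x * of_real (qnorm2 g)) * x"
    by (simp only: qcnj_mult_self mult.assoc)
  also have "\<dots> = g * (qcnj g * g) * x^2"
    by (simp only: of_real_mult_commute[of x] qcnj_mult_self mult.assoc power2_eq_square)
  finally show ?thesis by (simp only: mult.assoc)
qed

theorem mainTheorem17:
  fixes a :: "nat \<Rightarrow> quat" and n :: nat and z0 :: quat
  assumes "n \<ge> 1" and "a 0 \<noteq> 0"
  defines "c \<equiv> coeffs1 a n"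
  defines "g \<equiv> gpoly c n" and "gbar \<equiv> gpoly (qcnj \<circ> c) n" and "h \<equiv> hpoly c n"
  defines "r0 \<equiv> of_real (qRe z0)" and "x0 \<equiv> qIm z0" and "N0 \<equiv> - (qIm z0 ^ 2)"
  shows "fpoly a n z0 = 0 \<longleftrightarrow>
    ((g r0 N0 = 0 \<and> h r0 N0 = 0) \<or>
     (g r0 N0 \<noteq> 0 \<and>
      - (g r0 N0 * gbar r0 N0 * g r0 N0 * N0) = h r0 N0 * gbar r0 N0 * h r0 N0 \<and>
      x0 = - (inverse (g r0 N0) * h r0 N0)))"
proof -
  obtain s u where u: "u * u = - 1" and x0: "x0 = of_real s * u"
    using qIm_eq_scaled_unit unfolding x0_def by blast
  have z0: "z0 = of_real (qRe z0) + of_real s * u"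
    using x0 by (simp add: x0_def qIm_def diff_eq_eq add.commute)
  have N0: "N0 = of_real (s^2)"
    unfolding N0_def x0_def[symmetric] x0 of_real_unit_square[OF u] by simp
  have f: "fpoly a n z0 = g r0 N0 * x0 + h r0 N0"
    using fpoly_of_real_plus_unit[OF u, of a n "qRe z0" s]
    unfolding z0[symmetric] by (simp only: g_def h_def c_def r0_def N0 x0)
  have gbar: "gbar r0 N0 = qcnj (g r0 N0)"
    unfolding gbar_def g_def r0_def N0 by (rule gpoly_qcnj_of_real)
  show ?thesis
  proof (cases "g r0 N0 = 0")
    case False
    have "fpoly a n z0 = 0 \<longleftrightarrow> x0 = - (inverse (g r0 N0) * h r0 N0)"
      unfolding f by (rule quat_linear_eq_0_iff[OF False])
    moreover have "- (g r0 N0 * gbar r0 N0 * g r0 N0 * N0) = h r0 N0 * gbar r0 N0 * h r0 N0"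
      if "fpoly a n z0 = 0"
      using quat_linear_root_constraint[of "g r0 N0" x0 "h r0 N0"] that
      unfolding f gbar unfolding N0_def x0_def by simp
    ultimately show ?thesis using False by blast
  qed (simp add: f)
qed

end
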